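(* Let $k\geq 0$ and $n\geq k$ be integers, and let $G$ be a $k$-degenerate graph of order $n$. Then $q(G)<q(S_{n,k})$, unless $G=S_{n,k}$.
   Context: All graphs are finite and simple. A graph $G$ is $k$-degenerate if every subgraph of $G$ contains a vertex of degree at most $k$. $S_{n,k}$ denotes the join of a complete graph of order $k$ and an independent set of order $n-k$. For a graph $H$, $q(H)$ denotes the largest eigenvalue of the signless Laplacian $Q(H)=D(H)+A(H)$, where $A(H)$ is the adjacency matrix and $D(H)$ the diagonal matrix of vertex degrees. *)

theory Defs
  imports "Jordan_Normal_Form.Char_Poly"
begin

definition simple_graph :: "nat \<Rightarrow> (nat \<Rightarrow> nat \<Rightarrow> bool) \<Rightarrow> bool" where
  "simple_graph n E \<longleftrightarrow>
     (\<forall>u v. E u v \<longrightarrow> u < n \<and> v < n) \<and>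
     (\<forall>u v. E u v \<longrightarrow> E v u) \<and> (\<forall>u. \<not> E u u)"

definition degenerate :: "nat \<Rightarrow> nat \<Rightarrow> (nat \<Rightarrow> nat \<Rightarrow> bool) \<Rightarrow> bool" where
  "degenerate k n E \<longleftrightarrow>
     (\<forall>U F. U \<subseteq> {0..<n} \<longrightarrow> U \<noteq> {} \<longrightarrow>
        (\<forall>u v. F u v \<longrightarrow> E u v \<and> u \<in> U \<and> v \<in> U) \<longrightarrow>
        (\<forall>u v. F u v \<longrightarrow> F v u) \<longrightarrow>
        (\<exists>v\<in>U. card {u \<in> U. F v u} \<le> k))"

text \<open>S_{n,k}: join of K_k (vertices 0..k-1) and an independent set (vertices k..n-1).\<close>
definition S_graph :: "nat \<Rightarrow> nat \<Rightarrow> nat \<Rightarrow> nat \<Rightarrow> bool" where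
  "S_graph n k u v \<longleftrightarrow> u < n \<and> v < n \<and> u \<noteq> v \<and> (u < k \<or> v < k)"

definition graph_iso :: "nat \<Rightarrow> (nat \<Rightarrow> nat \<Rightarrow> bool) \<Rightarrow> (nat \<Rightarrow> nat \<Rightarrow> bool) \<Rightarrow> bool" where
  "graph_iso n E1 E2 \<longleftrightarrow>
     (\<exists>f. bij_betw f {0..<n} {0..<n} \<and> (\<forall>u<n. \<forall>v<n. E1 u v \<longleftrightarrow> E2 (f u) (f v)))"

definition degree :: "nat \<Rightarrow> (nat \<Rightarrow> nat \<Rightarrow> bool) \<Rightarrow> nat \<Rightarrow> nat" where
  "degree n E v = card {u. u < n \<and> E v u}"

definition signless_laplacian :: "nat \<Rightarrow> (nat \<Rightarrow> nat \<Rightarrow> bool) \<Rightarrow> real mat" where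
  "signless_laplacian n E =
     mat n n (\<lambda>(i, j). (if i = j then real (degree n E i) else 0) + (if E i j then 1 else 0))"

definition q_index :: "nat \<Rightarrow> (nat \<Rightarrow> nat \<Rightarrow> bool) \<Rightarrow> real" where
  "q_index n E = Max {x. eigenvalue (signless_laplacian n E) x}"

end

theory Submission
  imports Defs "Jordan_Normal_Form.Spectral_Radius"
begin

text \<open>Let \<open>q\<close> be the larger root of \<open>x\<^sup>2 - (n + 2k - 2) x + 2k(k - 1)\<close> and
  \<open>c = (q - (n + 2k - 2)) / 2\<close>. The vector that is \<open>n - 1 + c\<close> on the clique of \<open>S\<^sub>n\<^sub>,\<^sub>k\<close> and
  \<open>k + c\<close> on its independent set is a positive eigenvector of \<open>Q(S\<^sub>n\<^sub>,\<^sub>k)\<close> for \<open>q\<close>. For a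
  \<open>k\<close>-degenerate \<open>G\<close>, the vector \<open>y\<^sub>v = max(d\<^sub>v, k) + c\<close> satisfies \<open>Q(G) y \<le> q y\<close>
  entrywise, because degeneracy bounds the number of edges inside every vertex set of size at
  least \<open>k\<close>. A Collatz--Wielandt argument then bounds every eigenvalue of \<open>Q(G)\<close> by \<open>q\<close>, and
  equality forces every vertex to have degree \<open>n - 1\<close>, or degree \<open>k\<close> with all neighbours of
  degree \<open>n - 1\<close>; such a graph is \<open>S\<^sub>n\<^sub>,\<^sub>k\<close>.\<close>

section \<open>Eigenvalues of real symmetric matrices\<close>

lemma eigenvalue_iff_eigenfunction:
  fixes A :: "'a :: comm_ring_1 mat"
  assumes A: "A \<in> carrier_mat n n"
  shows "eigenvalue A lam \<longleftrightarrow>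
    (\<exists>x. (\<exists>i<n. x i \<noteq> 0) \<and> (\<forall>i<n. (\<Sum>j<n. A $$ (i, j) * x j) = lam * x i))"
    (is "_ \<longleftrightarrow> (\<exists>x. ?eigen x)")
proof -
  have eigenvector_iff: "eigenvector A v lam \<longleftrightarrow> ?eigen (($) v)" if v: "v \<in> carrier_vec n" for v
  proof -
    have "v \<noteq> 0\<^sub>v n \<longleftrightarrow> (\<exists>i<n. v $ i \<noteq> 0)"
      using v by (auto simp: vec_eq_iff)
    moreover have "(A *\<^sub>v v) $ i = (\<Sum>j<n. A $$ (i, j) * v $ j)" if "i < n" for i
      using A v that by (auto simp: scalar_prod_def lessThan_atLeast0 intro!: sum.cong)
    ultimately show ?thesis
      using A v unfolding eigenvector_def by (auto simp: vec_eq_iff)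
  qed
  show ?thesis
  proof
    assume "eigenvalue A lam"
    then obtain v where v: "eigenvector A v lam" unfolding eigenvalue_def by blast
    then have "v \<in> carrier_vec n" using A unfolding eigenvector_def by auto
    then show "\<exists>x. ?eigen x" using v eigenvector_iff by blast
  next
    assume "\<exists>x. ?eigen x"
    then obtain x where "?eigen x" by blast
    then have "?eigen (($) (vec n x))" by auto
    then show "eigenvalue A lam"
      unfolding eigenvalue_def using eigenvector_iff[of "vec n x"] by auto
  qed
qed

lemma eigenvalue_real_if_symmetric:
  fixes a :: "nat \<Rightarrow> nat \<Rightarrow> real" and v :: "nat \<Rightarrow> complex"
  assumes sym: "\<And>i j. i < n \<Longrightarrow> j < n \<Longrightarrow> a i j = a j i"
    and nonzero: "\<exists>i<n. v i \<noteq> 0"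
    and eigen: "\<And>i. i < n \<Longrightarrow> (\<Sum>j<n. of_real (a i j) * v j) = mu * v i"
  shows "Im mu = 0"
proof -
  \<comment> \<open>the Hermitian form \<open>v\<^sup>* A v\<close>: it equals \<open>mu \<parallel>v\<parallel>\<^sup>2\<close> and is real by symmetry\<close>
  define W where "W = (\<Sum>i<n. \<Sum>j<n. of_real (a i j) * cnj (v i) * v j)"
  define s where "s = (\<Sum>i<n. (cmod (v i))\<^sup>2)"
  have "cnj (v i) * (\<Sum>j<n. of_real (a i j) * v j) = mu * of_real ((cmod (v i))\<^sup>2)"
    if "i < n" for i
    unfolding eigen[OF that] complex_norm_square by (simp add: mult_ac)
  moreover have "W = (\<Sum>i<n. cnj (v i) * (\<Sum>j<n. of_real (a i j) * v j))"
    unfolding W_def by (simp add: sum_distrib_left mult_ac)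
  ultimately have "W = (\<Sum>i<n. mu * of_real ((cmod (v i))\<^sup>2))"
    by (metis (no_types, lifting) lessThan_iff sum.cong)
  then have W_eq: "W = mu * of_real s"
    unfolding s_def by (simp add: sum_distrib_left)
  have "cnj W = (\<Sum>i<n. \<Sum>j<n. of_real (a i j) * v i * cnj (v j))"
    unfolding W_def by (simp add: mult_ac)
  also have "\<dots> = (\<Sum>j<n. \<Sum>i<n. of_real (a i j) * v i * cnj (v j))"
    by (rule sum.swap)
  also have "\<dots> = W"
    unfolding W_def by (intro sum.cong refl) (auto simp: sym mult_ac)
  finally have "Im W = 0"
    by (metis cnj.simps(2) neg_equal_zero)
  moreover obtain i0 where "i0 < n" "v i0 \<noteq> 0" using nonzero by blast
  then have "s > 0"
    unfolding s_def by (intro sum_pos2[of _ i0]) auto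
  ultimately show ?thesis using W_eq by simp
qed

lemma symmetric_real_mat_has_eigenvalue:
  fixes A :: "real mat"
  assumes A: "A \<in> carrier_mat n n" and "0 < n"
    and sym: "\<And>i j. i < n \<Longrightarrow> j < n \<Longrightarrow> A $$ (i, j) = A $$ (j, i)"
  shows "\<exists>lam. eigenvalue A lam"
proof -
  let ?Ac = "map_mat complex_of_real A"
  have Ac: "?Ac \<in> carrier_mat n n" using A by simp
  obtain mu where "eigenvalue ?Ac mu"
    using spectrum_non_empty[OF Ac \<open>0 < n\<close>] unfolding spectrum_def by auto
  then obtain v where nonzero: "\<exists>i<n. v i \<noteq> 0"
    and eigen: "\<And>i. i < n \<Longrightarrow> (\<Sum>j<n. of_real (A $$ (i, j)) * v j) = mu * v i"
    using A unfolding eigenvalue_iff_eigenfunction[OF Ac] by auto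
  have "Im mu = 0" by (rule eigenvalue_real_if_symmetric[OF sym nonzero eigen])
  then have re: "(\<Sum>j<n. A $$ (i, j) * Re (v j)) = Re mu * Re (v i)"
    and im: "(\<Sum>j<n. A $$ (i, j) * Im (v j)) = Re mu * Im (v i)" if "i < n" for i
    using arg_cong[OF eigen[OF that], of Re] arg_cong[OF eigen[OF that], of Im]
    by simp_all
  show ?thesis
  proof (cases "\<exists>i<n. Re (v i) \<noteq> 0")
    case True
    then have "eigenvalue A (Re mu)"
      unfolding eigenvalue_iff_eigenfunction[OF A] using re by (intro exI[of _ "\<lambda>i. Re (v i)"]) auto
    then show ?thesis ..
  next
    case False
    then have "\<exists>i<n. Im (v i) \<noteq> 0" using nonzero complex_eqI by fastforce
    then have "eigenvalue A (Re mu)"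
      unfolding eigenvalue_iff_eigenfunction[OF A] using im by (intro exI[of _ "\<lambda>i. Im (v i)"]) auto
    then show ?thesis ..
  qed
qed

section \<open>A Collatz--Wielandt bound\<close>

lemma eigen_bound_at_extremal_vertex:
  fixes x y :: "nat \<Rightarrow> real"
  assumes "finite N" and "0 \<le> d" and "0 < t" and "0 < y i"
    and dominated: "\<And>j. j \<in> N \<Longrightarrow> \<bar>x j\<bar> \<le> t * y j" and extremal: "\<bar>x i\<bar> = t * y i"
    and eigen: "d * x i + (\<Sum>j\<in>N. x j) = lam * x i"
    and super: "d * y i + (\<Sum>j\<in>N. y j) \<le> q * y i"
  shows "\<bar>lam\<bar> \<le> q"
    and "\<bar>lam\<bar> = q \<Longrightarrow> (\<forall>j\<in>N. \<bar>x j\<bar> = t * y j) \<and> d * y i + (\<Sum>j\<in>N. y j) = q * y i"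
proof -
  have "\<bar>lam\<bar> * (t * y i) = \<bar>d * x i + (\<Sum>j\<in>N. x j)\<bar>"
    using extremal eigen by (simp add: abs_mult)
  also have "\<dots> \<le> \<bar>d * x i\<bar> + \<bar>\<Sum>j\<in>N. x j\<bar>"
    by (rule abs_triangle_ineq)
  also have "\<dots> \<le> d * (t * y i) + (\<Sum>j\<in>N. \<bar>x j\<bar>)"
  proof -
    have "\<bar>d * x i\<bar> = d * (t * y i)" using \<open>0 \<le> d\<close> extremal by (simp add: abs_mult)
    then show ?thesis using sum_abs[of x N] by linarith
  qed
  finally have triangle: "\<bar>lam\<bar> * (t * y i) \<le> d * (t * y i) + (\<Sum>j\<in>N. \<bar>x j\<bar>)" .
  have dominated_sum: "(\<Sum>j\<in>N. \<bar>x j\<bar>) \<le> (\<Sum>j\<in>N. t * y j)"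
    by (rule sum_mono) (rule dominated)
  have scaled_super: "d * (t * y i) + (\<Sum>j\<in>N. t * y j) \<le> q * (t * y i)"
    using mult_left_mono[OF super less_imp_le[OF \<open>0 < t\<close>]]
    by (simp add: sum_distrib_left algebra_simps)
  have "\<bar>lam\<bar> * (t * y i) \<le> q * (t * y i)"
    using triangle dominated_sum scaled_super by linarith
  moreover have "0 < t * y i" using \<open>0 < t\<close> \<open>0 < y i\<close> by simp
  ultimately show "\<bar>lam\<bar> \<le> q" by (rule mult_right_le_imp_le)
  assume "\<bar>lam\<bar> = q"
  then have "q * (t * y i) \<le> d * (t * y i) + (\<Sum>j\<in>N. \<bar>x j\<bar>)" using triangle by simp
  then have sums_eq: "(\<Sum>j\<in>N. \<bar>x j\<bar>) = (\<Sum>j\<in>N. t * y j)"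
    and super_eq: "d * (t * y i) + (\<Sum>j\<in>N. t * y j) = q * (t * y i)"
    using dominated_sum scaled_super by linarith+
  have "\<forall>j\<in>N. \<bar>x j\<bar> = t * y j"
  proof (rule ccontr)
    assume "\<not> ?thesis"
    then obtain j where "j \<in> N" "\<bar>x j\<bar> < t * y j"
      using dominated by (meson order_less_le)
    then have "(\<Sum>j\<in>N. \<bar>x j\<bar>) < (\<Sum>j\<in>N. t * y j)"
      using \<open>finite N\<close> dominated by (intro sum_strict_mono_ex1) auto
    then show False using sums_eq by simp
  qed
  moreover have "t * (d * y i + (\<Sum>j\<in>N. y j)) = t * (q * y i)"
    using super_eq by (simp add: sum_distrib_left algebra_simps)
  ultimately show "(\<forall>j\<in>N. \<bar>x j\<bar> = t * y j) \<and> d * y i + (\<Sum>j\<in>N. y j) = q * y i"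
    using \<open>0 < t\<close> by simp
qed

text \<open>The operator \<open>x \<mapsto> (d i * x i + (\<Sum>j\<in>N i. x j))\<^sub>i\<close> stands for \<open>Q\<close>. In the equality case
  \<open>M\<close> is the set of vertices where \<open>\<bar>x\<bar> / y\<close> attains its maximum.\<close>

lemma eigenvalue_le_by_supersolution:
  fixes x y d :: "nat \<Rightarrow> real" and N :: "nat \<Rightarrow> nat set"
  assumes N: "\<And>i. i < n \<Longrightarrow> N i \<subseteq> {..<n}" and d: "\<And>i. i < n \<Longrightarrow> 0 \<le> d i"
    and y: "\<And>i. i < n \<Longrightarrow> 0 < y i"
    and super: "\<And>i. i < n \<Longrightarrow> d i * y i + (\<Sum>j\<in>N i. y j) \<le> q * y i"
    and nonzero: "\<exists>i<n. x i \<noteq> 0"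
    and eigen: "\<And>i. i < n \<Longrightarrow> d i * x i + (\<Sum>j\<in>N i. x j) = lam * x i"
  shows "lam \<le> q"
    and "lam = q \<Longrightarrow> \<exists>M. M \<noteq> {} \<and> M \<subseteq> {..<n} \<and> (\<forall>i\<in>M. N i \<subseteq> M)
          \<and> (\<forall>i\<in>M. d i * y i + (\<Sum>j\<in>N i. y j) = q * y i)"
proof -
  define t where "t = (MAX i\<in>{..<n}. \<bar>x i\<bar> / y i)"
  define M where "M = {i. i < n \<and> \<bar>x i\<bar> = t * y i}"
  obtain i1 where "i1 < n" "x i1 \<noteq> 0" using nonzero by blast
  then have "0 < \<bar>x i1\<bar> / y i1" "\<bar>x i1\<bar> / y i1 \<le> t"
    using y unfolding t_def by auto
  then have "0 < t" by linarith
  have dominated: "\<bar>x j\<bar> \<le> t * y j" if "j < n" for j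
  proof -
    have "\<bar>x j\<bar> / y j \<le> t" unfolding t_def using that by (intro Max_ge) auto
    then show ?thesis using y[OF that] by (simp add: divide_le_eq)
  qed
  obtain i0 where "i0 < n" "t = \<bar>x i0\<bar> / y i0"
    using \<open>i1 < n\<close> unfolding t_def by (metis (no_types, lifting) Max_in empty_iff
      finite_imageI finite_lessThan image_iff image_is_empty lessThan_iff)
  then have "i0 \<in> M" unfolding M_def using y[of i0] by simp
  have local_bound: "\<bar>lam\<bar> \<le> q"
    and local_eq: "\<bar>lam\<bar> = q \<Longrightarrow> N i \<subseteq> M \<and> d i * y i + (\<Sum>j\<in>N i. y j) = q * y i"
    if "i \<in> M" for i
  proof -
    have i: "i < n" "\<bar>x i\<bar> = t * y i" using that unfolding M_def by auto
    have fin: "finite (N i)" using N[OF i(1)] by (rule finite_subset) simp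
    have dominated_i: "\<bar>x j\<bar> \<le> t * y j" if "j \<in> N i" for j
      using that dominated N[OF i(1)] by blast
    note bound = eigen_bound_at_extremal_vertex[OF fin d[OF i(1)] \<open>0 < t\<close> y[OF i(1)]
        dominated_i i(2) eigen[OF i(1)] super[OF i(1)]]
    show "\<bar>lam\<bar> \<le> q" by (rule bound(1))
    assume "\<bar>lam\<bar> = q"
    then have "(\<forall>j\<in>N i. \<bar>x j\<bar> = t * y j) \<and> d i * y i + (\<Sum>j\<in>N i. y j) = q * y i"
      using bound(2) by blast
    then show "N i \<subseteq> M \<and> d i * y i + (\<Sum>j\<in>N i. y j) = q * y i"
      using N[OF i(1)] unfolding M_def by auto
  qed
  show "lam \<le> q" using local_bound[OF \<open>i0 \<in> M\<close>] by simp
  assume "lam = q"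
  then have "\<bar>lam\<bar> = q" using local_bound[OF \<open>i0 \<in> M\<close>] by simp
  then show "\<exists>M. M \<noteq> {} \<and> M \<subseteq> {..<n} \<and> (\<forall>i\<in>M. N i \<subseteq> M)
          \<and> (\<forall>i\<in>M. d i * y i + (\<Sum>j\<in>N i. y j) = q * y i)"
  proof (intro exI conjI)
    show "M \<noteq> {}" and "M \<subseteq> {..<n}" using \<open>i0 \<in> M\<close> unfolding M_def by auto
    show "\<forall>i\<in>M. N i \<subseteq> M" and "\<forall>i\<in>M. d i * y i + (\<Sum>j\<in>N i. y j) = q * y i"
      using local_eq \<open>\<bar>lam\<bar> = q\<close> by blast+
  qed
qed

section \<open>Degrees, degeneracy and the signless Laplacian\<close>

definition neighbours :: "nat \<Rightarrow> (nat \<Rightarrow> nat \<Rightarrow> bool) \<Rightarrow> nat \<Rightarrow> nat set" where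
  "neighbours n E i = {j. j < n \<and> E i j}"

lemma finite_neighbours [simp]: "finite (neighbours n E i)"
  unfolding neighbours_def by simp

lemma degree_eq_card_neighbours: "degree n E i = card (neighbours n E i)"
  unfolding degree_def neighbours_def ..

lemma simple_graphD:
  assumes "simple_graph n E"
  shows "E u v \<Longrightarrow> u < n" and "E u v \<Longrightarrow> v < n" and "E u v \<Longrightarrow> E v u" and "\<not> E u u"
  using assms unfolding simple_graph_def by blast+

lemma signless_laplacian_carrier: "signless_laplacian n E \<in> carrier_mat n n"
  unfolding signless_laplacian_def by simp

lemma signless_laplacian_symmetric:
  "simple_graph n E \<Longrightarrow> i < n \<Longrightarrow> j < n \<Longrightarrow>
    signless_laplacian n E $$ (i, j) = signless_laplacian n E $$ (j, i)"
  unfolding signless_laplacian_def by (auto dest: simple_graphD(3))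

lemma signless_laplacian_row_sum:
  assumes "i < n"
  shows "(\<Sum>j<n. signless_laplacian n E $$ (i, j) * x j)
    = real (degree n E i) * x i + (\<Sum>j\<in>neighbours n E i. x j)"
proof -
  have "(\<Sum>j<n. signless_laplacian n E $$ (i, j) * x j)
      = (\<Sum>j<n. if i = j then real (degree n E i) * x j else 0) + (\<Sum>j<n. if E i j then x j else 0)"
    using assms unfolding signless_laplacian_def sum.distrib[symmetric]
    by (intro sum.cong) (auto simp: distrib_right)
  moreover have "neighbours n E i = {j \<in> {..<n}. E i j}"
    unfolding neighbours_def by auto
  then have "(\<Sum>j<n. if E i j then x j else 0) = (\<Sum>j\<in>neighbours n E i. x j)"
    by (simp only: sum.inter_filter[OF finite_lessThan])
  ultimately show ?thesis
    using assms by simp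
qed

lemma eigenvalue_signless_laplacian_iff:
  "eigenvalue (signless_laplacian n E) lam \<longleftrightarrow>
    (\<exists>x. (\<exists>i<n. x i \<noteq> 0) \<and>
      (\<forall>i<n. real (degree n E i) * x i + (\<Sum>j\<in>neighbours n E i. x j) = lam * x i))"
  by (simp add: eigenvalue_iff_eigenfunction[OF signless_laplacian_carrier] signless_laplacian_row_sum)

lemma finite_signless_laplacian_eigenvalues:
  "finite {lam. eigenvalue (signless_laplacian n E) lam}"
  using card_finite_spectrum(1)[OF signless_laplacian_carrier] unfolding spectrum_def .

lemma eigenvalue_le_q_index:
  "eigenvalue (signless_laplacian n E) lam \<Longrightarrow> lam \<le> q_index n E"
  unfolding q_index_def by (simp add: finite_signless_laplacian_eigenvalues)

lemma q_index_eigenvalue: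
  assumes "simple_graph n E" and "0 < n"
  shows "eigenvalue (signless_laplacian n E) (q_index n E)"
proof -
  have "{lam. eigenvalue (signless_laplacian n E) lam} \<noteq> {}"
    using symmetric_real_mat_has_eigenvalue[OF signless_laplacian_carrier \<open>0 < n\<close>]
      signless_laplacian_symmetric[OF assms(1)] by auto
  then show ?thesis
    unfolding q_index_def using Max_in[OF finite_signless_laplacian_eigenvalues] by blast
qed

lemma degree_le:
  assumes "simple_graph n E" and "i < n"
  shows "degree n E i \<le> n - 1"
proof -
  have "neighbours n E i \<subseteq> {0..<n} - {i}"
    using simple_graphD[OF assms(1)] unfolding neighbours_def by auto
  then have "card (neighbours n E i) \<le> card ({0..<n} - {i})" by (intro card_mono) auto
  then show ?thesis using assms(2) by (simp add: degree_eq_card_neighbours)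
qed

lemma full_degree_adjacent:
  assumes "simple_graph n E" and "u < n" and "degree n E u = n - 1" and "v < n" and "v \<noteq> u"
  shows "E u v"
proof -
  have sub: "neighbours n E u \<subseteq> {0..<n} - {u}"
    using simple_graphD(4)[OF assms(1), of u] unfolding neighbours_def by auto
  moreover have "card (neighbours n E u) = card ({0..<n} - {u})"
    using assms(2,3) by (simp add: degree_eq_card_neighbours)
  ultimately have "neighbours n E u = {0..<n} - {u}"
    by (rule card_subset_eq[OF finite_Diff[OF finite_atLeastLessThan]])
  then have "v \<in> neighbours n E u" using assms(4,5) by simp
  then show ?thesis unfolding neighbours_def by simp
qed

lemma degenerate_low_degree_vertex:
  assumes sg: "simple_graph n E" and "degenerate k n E"
    and "U \<subseteq> {0..<n}" and "U \<noteq> {}"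
  shows "\<exists>v\<in>U. card {u \<in> U. E v u} \<le> k"
proof -
  have "\<exists>v\<in>U. card {u \<in> U. E v u \<and> v \<in> U \<and> u \<in> U} \<le> k"
  proof (rule assms(2)[unfolded degenerate_def, rule_format, of U "\<lambda>a b. E a b \<and> a \<in> U \<and> b \<in> U"])
    show "U \<subseteq> {0..<n}" and "U \<noteq> {}" by fact+
    fix a b assume "E a b \<and> a \<in> U \<and> b \<in> U"
    then show "E a b \<and> a \<in> U \<and> b \<in> U" and "E b a \<and> b \<in> U \<and> a \<in> U"
      using simple_graphD(3)[OF sg] by auto
  qed
  moreover have "{u \<in> U. E v u \<and> v \<in> U \<and> u \<in> U} = {u \<in> U. E v u}" if "v \<in> U" for v
    using that by blast
  ultimately show ?thesis by auto
qed

lemma degenerate_zero_edgeless: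
  assumes sg: "simple_graph n E" and dg: "degenerate 0 n E"
  shows "\<not> E u v"
proof
  assume "E u v"
  then have "u < n" "v < n" "u \<noteq> v" "E v u" using simple_graphD[OF sg] by blast+
  then obtain w where "w \<in> {u, v}" "card {x \<in> {u, v}. E w x} \<le> 0"
    using degenerate_low_degree_vertex[OF sg dg, of "{u, v}"] by auto
  then show False using \<open>E u v\<close> \<open>E v u\<close> \<open>u \<noteq> v\<close> by auto
qed

lemma degenerate_order_minus_one:
  assumes sg: "simple_graph n E"
  shows "degenerate (n - 1) n E"
  unfolding degenerate_def
proof (intro allI impI)
  fix U F assume U: "U \<subseteq> {0..<n}" and "U \<noteq> {}"
    and F: "\<forall>u v. F u v \<longrightarrow> E u v \<and> u \<in> U \<and> v \<in> U"
  then obtain v where "v \<in> U" by auto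
  have "finite U" using U by (rule finite_subset) simp
  have "{u \<in> U. F v u} \<subseteq> U - {v}" using F simple_graphD(4)[OF sg, of v] by auto
  then have "card {u \<in> U. F v u} \<le> card U - 1"
    using card_mono[of "U - {v}"] \<open>finite U\<close> \<open>v \<in> U\<close> by fastforce
  also have "\<dots> \<le> n - 1" using card_mono[OF _ U] by simp
  finally show "\<exists>v\<in>U. card {u \<in> U. F v u} \<le> n - 1" using \<open>v \<in> U\<close> by blast
qed

section \<open>Counting edges in degenerate graphs\<close>

text \<open>\<open>arc_count E U\<close> is twice the number of edges of the subgraph induced by \<open>U\<close>.\<close>

definition arc_count :: "(nat \<Rightarrow> nat \<Rightarrow> bool) \<Rightarrow> nat set \<Rightarrow> nat" where
  "arc_count E U = card {(a, b). a \<in> U \<and> b \<in> U \<and> E a b}"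

lemma finite_arcs: "finite U \<Longrightarrow> finite {(a, b). a \<in> U \<and> b \<in> U \<and> E a b}"
  by (rule finite_subset[of _ "U \<times> U"]) auto

lemma arc_count_remove:
  assumes sg: "simple_graph n E" and "finite U" and "v \<in> U"
  shows "arc_count E U = arc_count E (U - {v}) + 2 * card {u \<in> U. E v u}"
proof -
  let ?N = "{u \<in> U. E v u}"
  let ?rest = "{(a, b). a \<in> U - {v} \<and> b \<in> U - {v} \<and> E a b}"
  let ?out = "Pair v ` ?N" and ?into = "(\<lambda>a. (a, v)) ` ?N"
  have "{(a, b). a \<in> U \<and> b \<in> U \<and> E a b} = ?rest \<union> (?out \<union> ?into)"
    using \<open>v \<in> U\<close> simple_graphD(3)[OF sg] by auto
  moreover have "?out \<inter> ?into = {}" using simple_graphD(4)[OF sg] by auto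
  moreover have "?rest \<inter> (?out \<union> ?into) = {}" by auto
  moreover have "card ?out = card ?N" "card ?into = card ?N"
    by (auto intro: card_image simp: inj_on_def)
  moreover have "finite ?rest" "finite ?N"
    using finite_arcs[of "U - {v}" E] \<open>finite U\<close> by simp_all
  ultimately show ?thesis
    unfolding arc_count_def by (simp add: card_Un_disjoint)
qed

lemma arc_count_le:
  assumes sg: "simple_graph n E" and "finite U"
  shows "arc_count E U + card U \<le> card U * card U"
proof -
  let ?diag = "(\<lambda>a. (a, a)) ` U"
  have "{(a, b). a \<in> U \<and> b \<in> U \<and> E a b} \<subseteq> U \<times> U - ?diag"
    using simple_graphD(4)[OF sg] by auto
  then have "arc_count E U \<le> card (U \<times> U - ?diag)"
    unfolding arc_count_def using \<open>finite U\<close> by (intro card_mono) auto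
  also have "\<dots> = card (U \<times> U) - card ?diag"
    using \<open>finite U\<close> by (intro card_Diff_subset) auto
  also have "card ?diag = card U" by (rule card_image) (auto simp: inj_on_def)
  finally show ?thesis by (cases "card U") (auto simp: card_cartesian_product)
qed

lemma degenerate_arc_count_le:
  assumes sg: "simple_graph n E" and dg: "degenerate k n E"
    and "U \<subseteq> {0..<n}" and "k \<le> card U"
  shows "arc_count E U + k * (k + 1) \<le> 2 * k * card U"
proof -
  have "arc_count E U + k * (k + 1) \<le> 2 * k * card U"
    if "U \<subseteq> {0..<n}" and "card U = k + m" for U m
    using that
  proof (induction m arbitrary: U)
    case 0
    then have "finite U" by (meson finite_atLeastLessThan finite_subset)
    then show ?case using arc_count_le[OF sg \<open>finite U\<close>] 0 by (simp add: algebra_simps)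
  next
    case (Suc m)
    then have "finite U" and "U \<noteq> {}" by (auto intro: finite_subset[of U "{0..<n}"])
    then obtain w where w: "w \<in> U" and low: "card {u \<in> U. E w u} \<le> k"
      using degenerate_low_degree_vertex[OF sg dg Suc.prems(1)] by blast
    have "arc_count E (U - {w}) + k * (k + 1) \<le> 2 * k * card (U - {w})"
      using Suc.prems w \<open>finite U\<close> by (intro Suc.IH) auto
    then show ?case
      using arc_count_remove[OF sg \<open>finite U\<close> w] low Suc.prems(2) w \<open>finite U\<close>
      by (simp add: algebra_simps)
  qed
  then show ?thesis using assms(3,4) le_Suc_ex by blast
qed

text \<open>Arcs \<open>(w, z)\<close> with \<open>w \<in> H\<close> and \<open>z \<noteq> u\<close> lie in \<open>V - {u}\<close>, and those whose reversal
  is again such an arc lie inside \<open>H\<close>; so twice their number is at most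
  \<open>arc_count E (V - {u}) + arc_count E H\<close>.\<close>

lemma neighbourhood_degree_sum_le:
  assumes sg: "simple_graph n E" and u: "u < n" and H: "H \<subseteq> neighbours n E u"
  shows "2 * (\<Sum>w\<in>H. degree n E w) + 2 * degree n E u
    \<le> arc_count E (insert u H) + arc_count E {0..<n}"
proof -
  let ?V = "{0..<n}"
  have "finite H" using H by (rule finite_subset) simp
  have "u \<notin> H" and "H \<subseteq> ?V"
    using H simple_graphD(4)[OF sg] unfolding neighbours_def by auto
  have adjacent: "E u w \<and> E w u" if "w \<in> H" for w
    using that H simple_graphD(3)[OF sg] unfolding neighbours_def by auto
  define A where "A = {p \<in> Sigma H (neighbours n E). snd p \<noteq> u}"
  let ?B = "prod.swap ` A"
  have "finite A" unfolding A_def using \<open>finite H\<close> by auto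
  have parts: "Sigma H (neighbours n E) = A \<union> (\<lambda>w. (w, u)) ` H" "A \<inter> (\<lambda>w. (w, u)) ` H = {}"
    unfolding A_def neighbours_def using adjacent u by auto
  have "(\<Sum>w\<in>H. degree n E w) = card (Sigma H (neighbours n E))"
    using \<open>finite H\<close> by (simp add: degree_eq_card_neighbours)
  also have "\<dots> = card A + card H"
    unfolding parts(1) using \<open>finite A\<close> \<open>finite H\<close> parts(2)
    by (simp add: card_Un_disjoint card_image inj_on_def)
  finally have "(\<Sum>w\<in>H. degree n E w) = card A + card H" .
  moreover have "card (A \<union> ?B) + card (A \<inter> ?B) = 2 * card A"
    using card_Un_Int[of A ?B] \<open>finite A\<close> by (simp add: card_image)
  moreover have "card (A \<union> ?B) \<le> arc_count E (?V - {u})"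
    unfolding arc_count_def using \<open>H \<subseteq> ?V\<close> \<open>u \<notin> H\<close> simple_graphD(3)[OF sg]
    by (intro card_mono finite_arcs) (auto simp: A_def neighbours_def)
  moreover have "card (A \<inter> ?B) \<le> arc_count E H"
    unfolding arc_count_def using \<open>finite H\<close>
    by (intro card_mono finite_arcs) (auto simp: A_def neighbours_def)
  moreover have "arc_count E ?V = arc_count E (?V - {u}) + 2 * degree n E u"
    using arc_count_remove[OF sg, of ?V u] u
    by (simp add: degree_eq_card_neighbours neighbours_def conj_commute)
  moreover have "arc_count E (insert u H) = arc_count E H + 2 * card H"
  proof -
    have "{w \<in> insert u H. E u w} = H" using adjacent simple_graphD(4)[OF sg] by auto
    then show ?thesis
      using arc_count_remove[OF sg, of "insert u H" u] \<open>finite H\<close> \<open>u \<notin> H\<close> by simp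
  qed
  ultimately show ?thesis by linarith
qed

lemma degenerate_neighbourhood_degree_sum_le:
  assumes sg: "simple_graph n E" and dg: "degenerate k n E" and "k \<le> n"
    and u: "u < n" and H: "H \<subseteq> neighbours n E u" and "k \<le> card H + 1"
  shows "(\<Sum>w\<in>H. degree n E w) + degree n E u + k * (k + 1) \<le> k * (card H + 1) + k * n"
proof -
  have "finite H" using H by (rule finite_subset) simp
  moreover have "u \<notin> H" "insert u H \<subseteq> {0..<n}"
    using H u simple_graphD(4)[OF sg] unfolding neighbours_def by auto
  ultimately have "arc_count E (insert u H) + k * (k + 1) \<le> 2 * k * (card H + 1)"
    using degenerate_arc_count_le[OF sg dg, of "insert u H"] \<open>k \<le> card H + 1\<close> by simp
  moreover have "arc_count E {0..<n} + k * (k + 1) \<le> 2 * k * n"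
    using degenerate_arc_count_le[OF sg dg, of "{0..<n}"] \<open>k \<le> n\<close> by simp
  ultimately show ?thesis
    using neighbourhood_degree_sum_le[OF sg u H] by linarith
qed

section \<open>Recognising \<open>S\<^sub>n\<^sub>,\<^sub>k\<close>\<close>

lemma neighbours_S_graph:
  assumes "k \<le> n" and "i < n"
  shows "neighbours n (S_graph n k) i = (if i < k then {0..<n} - {i} else {0..<k})"
  using assms unfolding neighbours_def S_graph_def by auto

lemma bij_onto_initial_segment:
  assumes "A \<subseteq> {0..<n}" and "card A = k"
  obtains f where "bij_betw f {0..<n} {0..<n}" and "\<And>x. x < n \<Longrightarrow> f x < k \<longleftrightarrow> x \<in> A"
proof -
  define B where "B = {0..<n} - A"
  have "finite A" using assms(1) by (rule finite_subset) simp
  have "k \<le> n" using card_mono[OF _ assms(1)] assms(2) by simp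
  obtain g where g: "bij_betw g A {0..<k}"
    using finite_same_card_bij[OF \<open>finite A\<close>, of "{0..<k}"] assms(2) by auto
  obtain h where h: "bij_betw h B {k..<n}"
    using finite_same_card_bij[of B "{k..<n}"] assms \<open>finite A\<close>
    unfolding B_def by (auto simp: card_Diff_subset)
  define f where "f x = (if x \<in> A then g x else h x)" for x
  have fA: "bij_betw f A {0..<k}"
    using g by (rule iffD1[OF bij_betw_cong, rotated]) (simp add: f_def)
  have fB: "bij_betw f B {k..<n}"
    using h by (rule iffD1[OF bij_betw_cong, rotated]) (simp add: f_def B_def)
  have "bij_betw f (A \<union> B) ({0..<k} \<union> {k..<n})"
    by (rule bij_betw_combine[OF fA fB]) auto
  moreover have "A \<union> B = {0..<n}" "{0..<k} \<union> {k..<n} = {0..<n}"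
    unfolding B_def using assms(1) \<open>k \<le> n\<close> by auto
  ultimately have "bij_betw f {0..<n} {0..<n}" by simp
  moreover have "f x < k \<longleftrightarrow> x \<in> A" if "x < n" for x
  proof (cases "x \<in> A")
    case True
    then show ?thesis using bij_betwE[OF fA] by auto
  next
    case False
    then have "x \<in> B" unfolding B_def using that by simp
    then show ?thesis using bij_betwE[OF fB] False by auto
  qed
  ultimately show ?thesis using that by blast
qed

lemma graph_iso_S_graphI:
  assumes "A \<subseteq> {0..<n}" and "card A = k"
    and edges: "\<And>u v. u < n \<Longrightarrow> v < n \<Longrightarrow> E u v \<longleftrightarrow> u \<noteq> v \<and> (u \<in> A \<or> v \<in> A)"
  shows "graph_iso n E (S_graph n k)"
proof -
  obtain f where f: "bij_betw f {0..<n} {0..<n}" and fA: "\<And>x. x < n \<Longrightarrow> f x < k \<longleftrightarrow> x \<in> A"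
    using bij_onto_initial_segment[OF assms(1,2)] by blast
  have "E u v \<longleftrightarrow> S_graph n k (f u) (f v)" if "u < n" "v < n" for u v
  proof -
    have "f u < n" "f v < n" "f u = f v \<longleftrightarrow> u = v"
      using that bij_betwE[OF f] bij_betw_imp_inj_on[OF f] unfolding inj_on_def by auto
    then show ?thesis using edges[OF that] fA that unfolding S_graph_def by auto
  qed
  then show ?thesis unfolding graph_iso_def using f by blast
qed

lemma graph_iso_if_edgeless:
  assumes "\<And>u v. u < n \<Longrightarrow> v < n \<Longrightarrow> \<not> E u v"
    and "\<And>u v. u < n \<Longrightarrow> v < n \<Longrightarrow> \<not> E' u v"
  shows "graph_iso n E E'"
  unfolding graph_iso_def using assms by (intro exI[of _ id]) auto

lemma graph_iso_S_graph_if_complete: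
  assumes sg: "simple_graph n E" and full: "\<And>v. v < n \<Longrightarrow> degree n E v = n - 1"
  shows "graph_iso n E (S_graph n (n - 1))"
proof (rule graph_iso_S_graphI)
  show "{0..<n - 1} \<subseteq> {0..<n}" and "card {0..<n - 1} = n - 1" by auto
  fix u v assume "u < n" "v < n"
  then have "E u v \<longleftrightarrow> u \<noteq> v"
    using full_degree_adjacent[OF sg \<open>u < n\<close> full] simple_graphD(4)[OF sg] by auto
  then show "E u v \<longleftrightarrow> u \<noteq> v \<and> (u \<in> {0..<n - 1} \<or> v \<in> {0..<n - 1})"
    using \<open>u < n\<close> \<open>v < n\<close> by auto
qed

definition S_vertex :: "nat \<Rightarrow> nat \<Rightarrow> (nat \<Rightarrow> nat \<Rightarrow> bool) \<Rightarrow> nat \<Rightarrow> bool" where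
  "S_vertex n k E v \<longleftrightarrow> degree n E v = n - 1
     \<or> (degree n E v = k \<and> (\<forall>j\<in>neighbours n E v. degree n E j = n - 1))"

text \<open>The vertices of degree \<open>n - 1\<close> form the clique; degeneracy provides a vertex outside
  it, and its neighbourhood is the whole clique.\<close>

lemma graph_iso_S_graph_if_S_vertices:
  assumes sg: "simple_graph n E" and dg: "degenerate k n E" and "k < n"
    and S_vertex: "\<And>v. v < n \<Longrightarrow> S_vertex n k E v"
  shows "graph_iso n E (S_graph n k)"
proof (cases "k = n - 1")
  case True
  then show ?thesis
    using graph_iso_S_graph_if_complete[OF sg] S_vertex \<open>k < n\<close> unfolding S_vertex_def by auto
next
  case False
  define A where "A = {v. v < n \<and> degree n E v = n - 1}"
  have outside: "neighbours n E v \<subseteq> A \<and> degree n E v = k" if "v < n" "v \<notin> A" for v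
    using S_vertex[OF that(1)] that unfolding S_vertex_def A_def neighbours_def by auto
  obtain b where b: "b < n" "card {u \<in> {0..<n}. E b u} \<le> k"
    using degenerate_low_degree_vertex[OF sg dg, of "{0..<n}"] \<open>k < n\<close> by auto
  then have "b \<notin> A"
    using False \<open>k < n\<close> unfolding A_def degree_def by (auto simp: conj_commute)
  have "neighbours n E b = A"
  proof
    show "neighbours n E b \<subseteq> A" using outside[OF b(1) \<open>b \<notin> A\<close>] by simp
    show "A \<subseteq> neighbours n E b"
      using full_degree_adjacent[OF sg] simple_graphD(3)[OF sg] \<open>b < n\<close> \<open>b \<notin> A\<close>
      unfolding A_def neighbours_def by blast
  qed
  then have "card A = k" using outside[OF b(1) \<open>b \<notin> A\<close>] by (simp add: degree_eq_card_neighbours)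
  moreover have "E u v \<longleftrightarrow> u \<noteq> v \<and> (u \<in> A \<or> v \<in> A)" if "u < n" "v < n" for u v
    using outside[of u] outside[of v] that full_degree_adjacent[OF sg] simple_graphD(3,4)[OF sg]
    unfolding A_def neighbours_def by blast
  ultimately show ?thesis by (intro graph_iso_S_graphI[of A]) (auto simp: A_def)
qed

lemma S_vertices_everywhere:
  assumes sg: "simple_graph n E" and "1 \<le> k"
    and "i \<in> M" and "M \<subseteq> {..<n}" and closed: "\<forall>i\<in>M. neighbours n E i \<subseteq> M"
    and S_vertex: "\<forall>v\<in>M. S_vertex n k E v"
  shows "{..<n} \<subseteq> M"
proof -
  obtain w where "w \<in> M" and full: "degree n E w = n - 1"
  proof (cases "degree n E i = n - 1")
    case False
    then have "degree n E i = k" and nbrs: "\<forall>j\<in>neighbours n E i. degree n E j = n - 1"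
      using S_vertex \<open>i \<in> M\<close> unfolding S_vertex_def by auto
    then obtain j where "j \<in> neighbours n E i"
      using \<open>1 \<le> k\<close> by (metis card.empty degree_eq_card_neighbours ex_in_conv not_one_le_zero)
    then show ?thesis using that nbrs closed \<open>i \<in> M\<close> by blast
  qed (use that \<open>i \<in> M\<close> in blast)
  have "w < n" using \<open>w \<in> M\<close> \<open>M \<subseteq> {..<n}\<close> by auto
  show ?thesis
  proof
    fix v assume "v \<in> {..<n}"
    then have "v = w \<or> v \<in> neighbours n E w"
      using full_degree_adjacent[OF sg \<open>w < n\<close> full] unfolding neighbours_def by auto
    then show "v \<in> M" using \<open>w \<in> M\<close> closed by auto
  qed
qed

lemma graph_iso_S_graph_if_edgeless:
  assumes simple: "simple_graph n E" and "degenerate k n E" and "k = 0 \<or> n \<le> 1"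
  shows "graph_iso n E (S_graph n k)"
proof (rule graph_iso_if_edgeless)
  fix u v assume "u < n" "v < n"
  show "\<not> E u v"
  proof (cases "k = 0")
    case True
    then show ?thesis using degenerate_zero_edgeless[OF simple] assms(2) by simp
  next
    case False
    then have "u = v" using assms(3) \<open>u < n\<close> \<open>v < n\<close> by linarith
    then show ?thesis using simple_graphD(4)[OF simple] by simp
  qed
  show "\<not> S_graph n k u v"
    using assms(3) \<open>u < n\<close> \<open>v < n\<close> unfolding S_graph_def by auto
qed

lemma S_graph_order: "S_graph n n = S_graph n (n - 1)"
  unfolding S_graph_def by (intro ext) auto

section \<open>The spectral bound\<close>

locale degenerate_graph =
  fixes n k :: nat and E :: "nat \<Rightarrow> nat \<Rightarrow> bool"
  assumes simple: "simple_graph n E" and degenerate: "degenerate k n E"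
    and k_pos: "1 \<le> k" and k_less: "k < n"
begin

text \<open>The larger root of \<open>x\<^sup>2 - (n + 2k - 2) x + 2k(k - 1)\<close>, which is \<open>q(S\<^sub>n\<^sub>,\<^sub>k)\<close>.\<close>

definition q :: real where
  "q = (real n + 2 * real k - 2
        + sqrt ((real n + 2 * real k - 2)\<^sup>2 - 8 * real k * (real k - 1))) / 2"

lemma discriminant_nonneg: "8 * real k * (real k - 1) \<le> (real n + 2 * real k - 2)\<^sup>2"
proof -
  have "(3 * real k - 1)\<^sup>2 \<le> (real n + 2 * real k - 2)\<^sup>2"
    using k_pos k_less by (intro power_mono) auto
  moreover have "(3 * real k - 1)\<^sup>2 - 8 * real k * (real k - 1) = (real k + 1)\<^sup>2"
    by (simp add: power2_eq_square algebra_simps)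
  ultimately show ?thesis using zero_le_power2[of "real k + 1"] by linarith
qed

lemma q_quadratic: "q * q = (real n + 2 * real k - 2) * q - 2 * real k * (real k - 1)"
proof -
  define N where "N = real n + 2 * real k - 2"
  have "(sqrt (N\<^sup>2 - 8 * real k * (real k - 1)))\<^sup>2 = N\<^sup>2 - 8 * real k * (real k - 1)"
    using discriminant_nonneg unfolding N_def by simp
  then show ?thesis
    unfolding q_def N_def[symmetric] by (simp add: field_simps power2_eq_square)
qed

lemma q_ge: "(real n + 2 * real k - 2) / 2 \<le> q"
  unfolding q_def using discriminant_nonneg by (simp add: divide_right_mono)

definition c :: real where "c = (q - (real n + 2 * real k - 2)) / 2"

definition raised_degree :: "nat \<Rightarrow> nat" where
  "raised_degree i = max (degree n E i) k"

text \<open>For \<open>G = S\<^sub>n\<^sub>,\<^sub>k\<close> this is the Perron vector of \<open>Q\<close>: \<open>n - 1 + c\<close> on the clique and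
  \<open>k + c\<close> on the independent set.\<close>

definition test_vector :: "nat \<Rightarrow> real" where
  "test_vector i = real (raised_degree i) + c"

definition raised_degree_sum :: "nat \<Rightarrow> real" where
  "raised_degree_sum i = (\<Sum>j\<in>neighbours n E i. real (raised_degree j))"

lemma q_mult_c: "q * c = - (real k * (real k - 1))"
proof -
  have "q * c = (q * q - (real n + 2 * real k - 2) * q) / 2"
    unfolding c_def by (simp add: algebra_simps)
  then show ?thesis unfolding q_quadratic by (simp add: field_simps)
qed

lemma q_gt: "real k - 1 < q" and q_pos: "0 < q"
  using q_ge k_pos k_less by auto

lemma k_plus_c_pos: "0 < real k + c"
proof -
  have "q * (real k + c) = real k * (q - real k + 1)" using q_mult_c by (simp add: algebra_simps)
  moreover have "0 < real k * (q - real k + 1)" using q_gt k_pos by simp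
  ultimately show ?thesis using q_pos zero_less_mult_pos by metis
qed

lemma test_vector_pos: "0 < test_vector i"
  using k_plus_c_pos unfolding test_vector_def raised_degree_def by linarith

text \<open>The slack of \<open>Q y \<le> q y\<close> at a vertex of degree \<open>d \<ge> k\<close>, once the sum of the raised
  degrees of its neighbours is bounded by \<open>(k - 1) d + k n - k\<^sup>2\<close>.\<close>

lemma q_identity:
  "q * (d + c) - d * (d + c) - d * c - ((real k - 1) * d + real k * real n - real k * real k)
    = (d - real k) * (real n - 1 - d)"
proof -
  have "d * c + d * c = d * q - d * (real n + 2 * real k - 2)"
    unfolding c_def by (simp add: algebra_simps)
  then show ?thesis using q_mult_c by (simp add: algebra_simps)
qed

lemma real_degree_le: "i < n \<Longrightarrow> real (degree n E i) \<le> real n - 1"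
  using degree_le[OF simple, of i] k_less by linarith

lemma raised_degree_le: "i < n \<Longrightarrow> real (raised_degree i) \<le> real n - 1"
  unfolding raised_degree_def using real_degree_le[of i] k_less by (auto simp: max_def)

lemma sum_test_vector_neighbours:
  "(\<Sum>j\<in>neighbours n E i. test_vector j) = raised_degree_sum i + real (degree n E i) * c"
  unfolding test_vector_def raised_degree_sum_def by (simp add: sum.distrib degree_eq_card_neighbours)

lemma raised_degree_sum_le:
  assumes "i < n"
  shows "raised_degree_sum i \<le> real (degree n E i) * (real n - 1)"
    and "raised_degree_sum i = real (degree n E i) * (real n - 1)
      \<Longrightarrow> \<forall>j\<in>neighbours n E i. raised_degree j = n - 1"
proof -
  have le: "\<forall>j\<in>neighbours n E i. real (raised_degree j) \<le> real n - 1"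
    using raised_degree_le by (auto simp: neighbours_def)
  then show "raised_degree_sum i \<le> real (degree n E i) * (real n - 1)"
    unfolding raised_degree_sum_def using sum_mono[of _ "\<lambda>j. real (raised_degree j)" "\<lambda>_. real n - 1"]
    by (simp add: degree_eq_card_neighbours)
  assume eq: "raised_degree_sum i = real (degree n E i) * (real n - 1)"
  show "\<forall>j\<in>neighbours n E i. raised_degree j = n - 1"
  proof (rule ccontr)
    assume "\<not> ?thesis"
    then obtain j where "j \<in> neighbours n E i" "real (raised_degree j) < real n - 1"
      using le k_less by fastforce
    then have "raised_degree_sum i < (\<Sum>j\<in>neighbours n E i. real n - 1)"
      unfolding raised_degree_sum_def using le by (intro sum_strict_mono_ex1) auto
    then show False using eq by (simp add: degree_eq_card_neighbours)
  qed
qed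

text \<open>Neighbours of degree below \<open>k\<close> contribute \<open>k\<close> each. The degrees of the set \<open>H\<close> of
  the other neighbours are bounded by degeneracy, applied to \<open>H \<union> {i}\<close> and to the whole graph,
  when \<open>|H| \<ge> k - 1\<close>, and trivially otherwise.\<close>

lemma raised_degree_sum_le_degenerate:
  assumes i: "i < n" and "k \<le> degree n E i"
  shows "raised_degree_sum i \<le> (real k - 1) * real (degree n E i) + real k * real n - real k * real k"
proof -
  define d where "d = degree n E i"
  define H where "H = {w \<in> neighbours n E i. k \<le> degree n E w}"
  define h where "h = card H"
  have H: "H \<subseteq> neighbours n E i" unfolding H_def by auto
  then have "finite H" and "h \<le> d"
    unfolding h_def d_def degree_eq_card_neighbours by (auto intro: card_mono finite_subset[of H])
  have "raised_degree_sum i = (\<Sum>w\<in>neighbours n E i - H. real k) + (\<Sum>w\<in>H. real (degree n E w))"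
    unfolding raised_degree_sum_def sum.subset_diff[OF H finite_neighbours]
    by (intro arg_cong2[where f = "(+)"] sum.cong) (auto simp: H_def raised_degree_def)
  also have "(\<Sum>w\<in>neighbours n E i - H. real k) = real k * (real d - real h)"
    using H \<open>finite H\<close> \<open>h \<le> d\<close>
    by (simp add: card_Diff_subset d_def h_def degree_eq_card_neighbours)
  finally have split: "raised_degree_sum i = real k * (real d - real h) + (\<Sum>w\<in>H. real (degree n E w))" .
  show ?thesis
  proof (cases "k \<le> h + 1")
    case True
    then have "(\<Sum>w\<in>H. degree n E w) + d + k * (k + 1) \<le> k * (h + 1) + k * n"
      using degenerate_neighbourhood_degree_sum_le[OF simple degenerate _ i H] k_less
      unfolding d_def h_def by simp
    then have "real ((\<Sum>w\<in>H. degree n E w) + d + k * (k + 1)) \<le> real (k * (h + 1) + k * n)"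
      by (simp only: of_nat_le_iff)
    then have degree_sum: "(\<Sum>w\<in>H. real (degree n E w)) + real d + real k * (real k + 1)
        \<le> real k * (real h + 1) + real k * real n"
      by (simp add: algebra_simps)
    have e1: "real k * (real d - real h) = real k * real d - real k * real h"
      and e2: "real k * (real h + 1) = real k * real h + real k"
      and e3: "(real k - 1) * real d = real k * real d - real d"
      and e4: "real k * (real k + 1) = real k * real k + real k"
      by (simp_all add: algebra_simps)
    have "raised_degree_sum i \<le> (real k - 1) * real d + real k * real n - real k * real k"
      unfolding split e1 e3 using degree_sum unfolding e2 e4 by linarith
    then show ?thesis unfolding d_def .
  next
    case False
    have "(\<Sum>w\<in>H. real (degree n E w)) \<le> real h * (real n - 1)"
      using sum_mono[of H "\<lambda>w. real (degree n E w)" "\<lambda>_. real n - 1"] real_degree_le H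
      unfolding h_def by (auto simp: neighbours_def)
    moreover have "real h * (real n - 1 - real k) \<le> (real k - 2) * (real n - 1 - real k)"
      using False k_less by (intro mult_right_mono) auto
    moreover have "real d \<le> real n - 1" using real_degree_le[OF i] unfolding d_def .
    ultimately show ?thesis using split k_less unfolding d_def[symmetric]
      by (simp add: algebra_simps)
  qed
qed

lemma supersolution_high_degree:
  assumes i: "i < n" and "k \<le> degree n E i"
  shows "real (degree n E i) * test_vector i + (\<Sum>j\<in>neighbours n E i. test_vector j)
      \<le> q * test_vector i"
    and "real (degree n E i) * test_vector i + (\<Sum>j\<in>neighbours n E i. test_vector j)
        = q * test_vector i
      \<Longrightarrow> S_vertex n k E i"
proof -
  define d where "d = degree n E i"
  have y: "test_vector i = real d + c"
    unfolding test_vector_def raised_degree_def d_def using assms(2) by simp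
  have lhs: "real d * test_vector i + (\<Sum>j\<in>neighbours n E i. test_vector j)
      = real d * test_vector i + raised_degree_sum i + real d * c"
    unfolding sum_test_vector_neighbours d_def by simp
  have gap: "(real d - real k) * (real n - 1 - real d)
      \<le> q * test_vector i - (real d * test_vector i + raised_degree_sum i + real d * c)"
    using q_identity[of "real d"] raised_degree_sum_le_degenerate[OF assms]
    unfolding y d_def by linarith
  have "0 \<le> (real d - real k) * (real n - 1 - real d)"
    using assms(2) real_degree_le[OF i] unfolding d_def by simp
  then show "real (degree n E i) * test_vector i + (\<Sum>j\<in>neighbours n E i. test_vector j)
      \<le> q * test_vector i"
    using gap lhs unfolding d_def by linarith
  assume "real (degree n E i) * test_vector i + (\<Sum>j\<in>neighbours n E i. test_vector j)
      = q * test_vector i"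
  then have eq: "real d * test_vector i + raised_degree_sum i + real d * c = q * test_vector i"
    using lhs unfolding d_def by simp
  show "S_vertex n k E i"
  proof (cases "d = k")
    case True
    have "(real k - 1) * real d + real k * real n - real k * real k = real d * (real n - 1)"
      using True by (simp add: algebra_simps)
    moreover have "(real d - real k) * (real n - 1 - real d) = 0" using True by simp
    ultimately have "raised_degree_sum i = real d * (real n - 1)"
      using q_identity[of "real d"] eq unfolding y by linarith
    then have raised: "\<forall>j\<in>neighbours n E i. max (degree n E j) k = n - 1"
      using raised_degree_sum_le(2)[OF i] unfolding d_def raised_degree_def by simp
    show ?thesis
    proof (cases "k = n - 1")
      case True
      then show ?thesis using \<open>d = k\<close> unfolding S_vertex_def d_def by simp
    next
      case False
      have "degree n E j = n - 1" if "j \<in> neighbours n E i" for j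
        using bspec[OF raised that] False by (auto simp: max_def split: if_splits)
      then show ?thesis using \<open>d = k\<close> unfolding S_vertex_def d_def by auto
    qed
  next
    case False
    then have "(real d - real k) * (real n - 1 - real d) = 0"
      using gap eq \<open>0 \<le> (real d - real k) * (real n - 1 - real d)\<close> by linarith
    then have "real n - 1 - real d = 0" using False by simp
    then show ?thesis unfolding S_vertex_def d_def using k_less by linarith
  qed
qed

lemma supersolution_low_degree:
  assumes i: "i < n" and "degree n E i < k"
  shows "real (degree n E i) * test_vector i + (\<Sum>j\<in>neighbours n E i. test_vector j)
      < q * test_vector i"
proof -
  define d where "d = degree n E i"
  have y: "test_vector i = real k + c"
    unfolding test_vector_def raised_degree_def using assms(2) by simp
  have "real d * test_vector i + (\<Sum>j\<in>neighbours n E i. test_vector j)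
      \<le> real d * (real k + c) + real d * (real n - 1) + real d * c"
    using raised_degree_sum_le(1)[OF i] unfolding sum_test_vector_neighbours y d_def by linarith
  also have "\<dots> = real d * (q - real k + 1)"
    unfolding c_def by (simp add: field_simps)
  also have "\<dots> \<le> (real k - 1) * (q - real k + 1)"
    using assms(2) q_gt unfolding d_def by (intro mult_right_mono) auto
  also have "\<dots> < real k * (q - real k + 1)" using q_gt by simp
  also have "\<dots> = q * test_vector i" unfolding y using q_mult_c by (simp add: algebra_simps)
  finally show ?thesis unfolding d_def .
qed

lemma supersolution:
  assumes "i < n"
  shows "real (degree n E i) * test_vector i + (\<Sum>j\<in>neighbours n E i. test_vector j)
      \<le> q * test_vector i"
    and "real (degree n E i) * test_vector i + (\<Sum>j\<in>neighbours n E i. test_vector j)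
        = q * test_vector i
      \<Longrightarrow> S_vertex n k E i"
proof -
  show "real (degree n E i) * test_vector i + (\<Sum>j\<in>neighbours n E i. test_vector j)
      \<le> q * test_vector i"
  proof (cases "k \<le> degree n E i")
    case True
    then show ?thesis by (rule supersolution_high_degree(1)[OF assms])
  next
    case False
    then show ?thesis using supersolution_low_degree[OF assms] by simp
  qed
  assume eq: "real (degree n E i) * test_vector i + (\<Sum>j\<in>neighbours n E i. test_vector j)
      = q * test_vector i"
  have "k \<le> degree n E i"
  proof (rule ccontr)
    assume "\<not> k \<le> degree n E i"
    then show False using supersolution_low_degree[OF assms] eq by simp
  qed
  then show "S_vertex n k E i" by (rule supersolution_high_degree(2)[OF assms _ eq])
qed

lemma q_eigenvalue_S_graph: "eigenvalue (signless_laplacian n (S_graph n k)) q"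
proof -
  define x where "x i = (if i < k then real n - 1 + c else real k + c)" for i
  have "{0..<n} = {0..<k} \<union> {k..<n}" using k_less by auto
  then have total: "(\<Sum>j\<in>{0..<n}. x j) = real k * (real n - 1 + c) + (real n - real k) * (real k + c)"
    using k_less by (simp add: sum.union_disjoint x_def)
  have "real (degree n (S_graph n k) i) * x i + (\<Sum>j\<in>neighbours n (S_graph n k) i. x j) = q * x i"
    if "i < n" for i
  proof (cases "i < k")
    case True
    then have "degree n (S_graph n k) i = n - 1" "(\<Sum>j\<in>neighbours n (S_graph n k) i. x j)
        = real k * (real n - 1 + c) + (real n - real k) * (real k + c) - (real n - 1 + c)"
      using that k_less total x_def
      by (simp_all add: degree_eq_card_neighbours neighbours_S_graph sum_diff1)
    moreover have "real (n - 1) = real n - 1" using k_less by simp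
    ultimately show ?thesis
      using q_identity[of "real n - 1"] True unfolding x_def by (simp add: algebra_simps)
  next
    case False
    then have "degree n (S_graph n k) i = k"
      "(\<Sum>j\<in>neighbours n (S_graph n k) i. x j) = real k * (real n - 1 + c)"
      using that k_less by (simp_all add: degree_eq_card_neighbours neighbours_S_graph x_def)
    then show ?thesis
      using q_identity[of "real k"] False unfolding x_def by (simp add: algebra_simps)
  qed
  moreover have "0 < n" "x 0 \<noteq> 0" using k_pos k_plus_c_pos k_less unfolding x_def by auto
  ultimately have "(\<exists>i<n. x i \<noteq> 0) \<and> (\<forall>i<n. real (degree n (S_graph n k) i) * x i
      + (\<Sum>j\<in>neighbours n (S_graph n k) i. x j) = q * x i)"
    by auto
  then show ?thesis unfolding eigenvalue_signless_laplacian_iff by blast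
qed

lemma eigenvalue_less_q:
  assumes not_iso: "\<not> graph_iso n E (S_graph n k)"
    and "eigenvalue (signless_laplacian n E) lam"
  shows "lam < q"
proof -
  obtain x where nonzero: "\<exists>i<n. x i \<noteq> 0"
    and eigen: "\<And>i. i < n \<Longrightarrow> real (degree n E i) * x i + (\<Sum>j\<in>neighbours n E i. x j) = lam * x i"
    using assms(2) unfolding eigenvalue_signless_laplacian_iff by blast
  have "neighbours n E i \<subseteq> {..<n}" for i by (auto simp: neighbours_def)
  note bound = eigenvalue_le_by_supersolution[of n "neighbours n E" "\<lambda>i. real (degree n E i)"
      test_vector q x lam, OF this of_nat_0_le_iff test_vector_pos supersolution(1) nonzero eigen]
  have "lam \<le> q" by (rule bound(1))
  moreover have "lam \<noteq> q"
  proof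
    assume "lam = q"
    then obtain M where "M \<noteq> {}" "M \<subseteq> {..<n}" and closed: "\<forall>i\<in>M. neighbours n E i \<subseteq> M"
      and tight: "\<forall>i\<in>M. real (degree n E i) * test_vector i
        + (\<Sum>j\<in>neighbours n E i. test_vector j) = q * test_vector i"
      using bound(2) by blast
    then obtain i where "i \<in> M" by blast
    have S_vertex: "\<forall>v\<in>M. S_vertex n k E v"
      using supersolution(2) tight \<open>M \<subseteq> {..<n}\<close> by blast
    have "{..<n} \<subseteq> M"
      by (rule S_vertices_everywhere[OF simple k_pos \<open>i \<in> M\<close> \<open>M \<subseteq> {..<n}\<close> closed S_vertex])
    then have "graph_iso n E (S_graph n k)"
      using S_vertex by (intro graph_iso_S_graph_if_S_vertices[OF simple degenerate k_less]) auto
    then show False using not_iso by contradiction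
  qed
  ultimately show ?thesis by simp
qed

theorem q_index_less_q_index_S_graph:
  assumes "\<not> graph_iso n E (S_graph n k)"
  shows "q_index n E < q_index n (S_graph n k)"
proof -
  have "q_index n E < q"
    using eigenvalue_less_q[OF assms q_index_eigenvalue[OF simple]] k_less by simp
  also have "q \<le> q_index n (S_graph n k)"
    by (rule eigenvalue_le_q_index[OF q_eigenvalue_S_graph])
  finally show ?thesis .
qed

end

theorem theorem2:
  fixes n k :: nat and E :: "nat \<Rightarrow> nat \<Rightarrow> bool"
  assumes "k \<le> n"
    and "simple_graph n E"
    and "degenerate k n E"
    and "\<not> graph_iso n E (S_graph n k)"
  shows "q_index n E < q_index n (S_graph n k)"
proof -
  note simple = assms(2)
  have nontrivial: "k \<noteq> 0 \<and> 1 < n"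
    using graph_iso_S_graph_if_edgeless[OF simple assms(3)] assms(4) by (metis not_le)
  show ?thesis
  proof (cases "k = n")
    case True
    interpret degenerate_graph n "n - 1" E
      using simple degenerate_order_minus_one[OF simple] nontrivial by unfold_locales auto
    show ?thesis
      using q_index_less_q_index_S_graph assms(4) unfolding True S_graph_order by blast
  next
    case False
    interpret degenerate_graph n k E
      using simple assms(1,3) nontrivial False by unfold_locales auto
    show ?thesis by (rule q_index_less_q_index_S_graph[OF assms(4)])
  qed
qed

end
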